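(* Let $2<\alpha<4$ and $c\ge 1$. For $N_1>0$ set $N_2=cN_1$, and let $(\Lambda_1^*,\Lambda_2^* )$ be the Nash equilibrium of the two-player Random Access Game in which player $i\in\{1,2\}$ chooses $\Lambda_i\in[0,N_i]$ and receives payoff \[ U_i(\Lambda_1,\Lambda_2)=\sup_{\beta>0}\ \Lambda_i\log(1+\beta)\,e^{-(\Lambda_1+\Lambda_2)\beta^{2/\alpha}} . \] Then, in the limit $N_1\to\infty$, the equilibrium is \[ (\Lambda_1^*,\Lambda_2^* )=\begin{cases}(N_1,N_2), & N_1\le N_2\le \frac{2}{\alpha-2}N_1,\\[2pt] \left(N_1,\frac{2}{\alpha-2}N_1\right), & \frac{2}{\alpha-2}N_1\le N_2,\end{cases} \] in the sense that $\Lambda_1^*=N_1$ and $\Lambda_2^*/N_1\to\min\!\left(c,\frac{2}{\alpha-2}\right)$ as $N_1\to\infty$.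
   Context: A Nash equilibrium is a pair $(\Lambda_1^*,\Lambda_2^* )\in[0,N_1]\times[0,N_2]$ such that $\Lambda_1^*$ maximizes $U_1(\cdot,\Lambda_2^* )$ over $[0,N_1]$ and $\Lambda_2^*$ maximizes $U_2(\Lambda_1^*,\cdot)$ over $[0,N_2]$. Here $\log$ is the natural logarithm. *)

theory Defs
  imports "HOL-Analysis.Analysis"
begin

definition rag_payoff :: "real \<Rightarrow> real \<Rightarrow> real \<Rightarrow> real \<Rightarrow> real" where
  "rag_payoff \<alpha> \<Lambda>i \<Lambda>1 \<Lambda>2 =
     Sup {\<Lambda>i * ln (1 + \<beta>) * exp (- (\<Lambda>1 + \<Lambda>2) * \<beta> powr (2 / \<alpha>)) | \<beta>. \<beta> > 0}"

definition U1 :: "real \<Rightarrow> real \<Rightarrow> real \<Rightarrow> real" where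
  "U1 \<alpha> \<Lambda>1 \<Lambda>2 = rag_payoff \<alpha> \<Lambda>1 \<Lambda>1 \<Lambda>2"

definition U2 :: "real \<Rightarrow> real \<Rightarrow> real \<Rightarrow> real" where
  "U2 \<alpha> \<Lambda>1 \<Lambda>2 = rag_payoff \<alpha> \<Lambda>2 \<Lambda>1 \<Lambda>2"

definition nash_eq :: "real \<Rightarrow> real \<Rightarrow> real \<Rightarrow> real \<Rightarrow> real \<Rightarrow> bool" where
  "nash_eq \<alpha> N1 N2 L1 L2 \<longleftrightarrow>
     L1 \<in> {0..N1} \<and> L2 \<in> {0..N2} \<and>
     (\<forall>x\<in>{0..N1}. U1 \<alpha> x L2 \<le> U1 \<alpha> L1 L2) \<and>
     (\<forall>y\<in>{0..N2}. U2 \<alpha> L1 y \<le> U2 \<alpha> L1 L2)"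

end

theory Submission
  imports Defs
begin

text \<open>Both payoffs factor as \<open>U\<^sub>i = \<Lambda>\<^sub>i g(\<Lambda>\<^sub>1 + \<Lambda>\<^sub>2)\<close> with a per-unit payoff \<open>g = unit_payoff \<alpha>\<close> of the
  total load. It satisfies \<open>G T\<^sup>-\<^sup>\<alpha>\<^sup>/\<^sup>2 / (1 + O(T\<^sup>-\<^sup>\<alpha>\<^sup>/\<^sup>2)) \<le> g(T) \<le> G T\<^sup>-\<^sup>\<alpha>\<^sup>/\<^sup>2\<close>, and \<open>T\<^sup>\<alpha>\<^sup>/\<^sup>2 g(T)\<close> is
  nondecreasing by concavity of \<open>ln\<close>. So against an opponent load \<open>y\<close> a player's payoff is
  \<open>x (x + y)\<^sup>-\<^sup>\<alpha>\<^sup>/\<^sup>2\<close> times a nondecreasing factor, hence strictly increasing up to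
  \<open>x = 2y/(\<alpha> - 2)\<close>, and a best response is at least \<open>min (N\<^sub>i, 2y/(\<alpha> - 2))\<close>. For \<open>\<alpha> < 4\<close>
  the threshold exceeds \<open>y\<close>, which forces \<open>\<Lambda>\<^sub>1 = N\<^sub>1\<close> and \<open>\<Lambda>\<^sub>2 \<ge> min (N\<^sub>2, 2N\<^sub>1/(\<alpha> - 2))\<close>.
  Conversely, for large \<open>N\<^sub>1\<close> the two bounds on \<open>g\<close> agree up to a factor tending to \<open>1\<close>, while
  \<open>t (t + 1)\<^sup>-\<^sup>\<alpha>\<^sup>/\<^sup>2\<close> has a strict maximum at \<open>t = 2/(\<alpha> - 2)\<close>; so player 2 cannot gain by
  exceeding \<open>2N\<^sub>1/(\<alpha> - 2)\<close> by a fixed fraction of \<open>N\<^sub>1\<close>.\<close>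

lemma ln_add_one_scaled_ge:
  fixes \<mu> b :: real
  assumes "0 \<le> \<mu>" "\<mu> \<le> 1" "0 \<le> b"
  shows "\<mu> * ln (1 + b) \<le> ln (1 + \<mu> * b)"
proof -
  have "(1 - \<mu>) * ln 1 + \<mu> * ln (1 + b) \<le> ln ((1 - \<mu>) *\<^sub>R 1 + \<mu> *\<^sub>R (1 + b))"
    by (rule concave_onD[OF ln_concave]) (use assms in auto)
  moreover have "(1 - \<mu>) *\<^sub>R 1 + \<mu> *\<^sub>R (1 + b) = 1 + \<mu> * b"
    by (simp add: algebra_simps)
  ultimately show ?thesis
    by (simp add: algebra_simps)
qed

lemma divide_add_one_le_ln_add_one:
  fixes x :: real
  assumes "0 \<le> x"
  shows "x / (1 + x) \<le> ln (1 + x)"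
proof -
  have "ln (1 / (1 + x)) \<le> 1 / (1 + x) - 1"
    using assms by (intro ln_le_minus_one) auto
  moreover have "1 / (1 + x) - 1 = - (x / (1 + x))"
    using assms by (simp add: field_simps)
  ultimately show ?thesis
    using assms by (simp add: ln_div)
qed

lemma powr_mult_exp_minus_le:
  fixes a u :: real
  assumes "0 < a" "0 < u"
  shows "u powr a * exp (- u) \<le> a powr a * exp (- a)"
proof -
  have "a * ln (u / a) \<le> a * (u / a - 1)"
    using assms by (intro mult_left_mono ln_le_minus_one) auto
  then have "a * ln u - u \<le> a * ln a - a"
    using assms by (simp add: ln_div algebra_simps)
  then have "exp (a * ln u - u) \<le> exp (a * ln a - a)"
    by simp
  then show ?thesis
    using assms by (simp add: powr_def exp_diff exp_minus divide_inverse)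
qed

lemma has_real_derivative_mult_add_powr:
  fixes a y t :: real
  assumes "0 < t + y"
  shows "((\<lambda>t. t * (t + y) powr (- a)) has_real_derivative
           (t + y) powr (- a - 1) * (y - (a - 1) * t)) (at t)"
proof -
  have "((\<lambda>t. t * (t + y) powr (- a)) has_real_derivative
          (t + y) powr (- a) + t * (- a * (t + y) powr (- a - 1))) (at t)"
    using assms by (auto intro!: derivative_eq_intros)
  moreover have "(t + y) * (t + y) powr (- a - 1) = (t + y) powr (- a)"
    using assms by (simp add: powr_mult_base)
  ultimately show ?thesis
    by (simp add: algebra_simps)
qed

lemma mult_add_powr_strict_mono:
  fixes a y x x' :: real
  assumes "0 < y" "1 < a" "0 \<le> x" "x < x'" "x' \<le> y / (a - 1)"
  shows "x * (x + y) powr (- a) < x' * (x' + y) powr (- a)"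
proof (rule DERIV_pos_imp_increasing_open[OF \<open>x < x'\<close>])
  fix t
  assume t: "x < t" "t < x'"
  have "(a - 1) * t < (a - 1) * (y / (a - 1))"
    using t assms by (intro mult_strict_left_mono) auto
  then have "0 < (t + y) powr (- a - 1) * (y - (a - 1) * t)"
    using t assms by simp
  then show "\<exists>d. ((\<lambda>t. t * (t + y) powr (- a)) has_real_derivative d) (at t) \<and> 0 < d"
    using has_real_derivative_mult_add_powr t assms by (metis add_pos_pos le_less_trans)
next
  show "continuous_on {x..x'} (\<lambda>t. t * (t + y) powr (- a))"
    using assms
    by (intro continuous_at_imp_continuous_on ballI DERIV_isCont[OF has_real_derivative_mult_add_powr]) auto
qed

lemma mult_add_powr_strict_antimono:
  fixes a y x x' :: real
  assumes "0 < y" "1 < a" "y / (a - 1) \<le> x" "x < x'"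
  shows "x' * (x' + y) powr (- a) < x * (x + y) powr (- a)"
proof (rule DERIV_neg_imp_decreasing_open[OF \<open>x < x'\<close>])
  have pos: "0 < t + y" if "x \<le> t" for t
    using that assms by (smt (verit) divide_pos_pos)
  fix t
  assume t: "x < t" "t < x'"
  have "(a - 1) * (y / (a - 1)) < (a - 1) * t"
    using t assms by (intro mult_strict_left_mono) auto
  then have "(t + y) powr (- a - 1) * (y - (a - 1) * t) < 0"
    using pos[of t] t assms by (simp add: mult_pos_neg)
  then show "\<exists>d. ((\<lambda>t. t * (t + y) powr (- a)) has_real_derivative d) (at t) \<and> d < 0"
    using has_real_derivative_mult_add_powr[OF pos[of t]] t by auto
next
  show "continuous_on {x..x'} (\<lambda>t. t * (t + y) powr (- a))"
    using assms
    by (intro continuous_at_imp_continuous_on ballI DERIV_isCont[OF has_real_derivative_mult_add_powr])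
      (smt (verit) atLeastAtMost_iff divide_pos_pos)
qed

definition unit_payoff :: "real \<Rightarrow> real \<Rightarrow> real" where
  "unit_payoff \<alpha> T = Sup {ln (1 + \<beta>) * exp (- T * \<beta> powr (2 / \<alpha>)) | \<beta>. \<beta> > 0}"

lemma unit_payoff_set_le:
  fixes \<alpha> T \<beta> :: real
  assumes "0 < \<alpha>" "0 < T" "0 < \<beta>"
  shows "ln (1 + \<beta>) * exp (- T * \<beta> powr (2 / \<alpha>))
           \<le> (\<alpha>/2) powr (\<alpha>/2) * exp (- (\<alpha>/2)) * T powr (- (\<alpha>/2))"
proof -
  define u where "u = T * \<beta> powr (2 / \<alpha>)"
  have u: "0 < u"
    using assms by (simp add: u_def)
  have "\<beta> = (\<beta> powr (2 / \<alpha>)) powr (\<alpha>/2)"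
    using assms by (simp add: powr_powr)
  also have "\<dots> = u powr (\<alpha>/2) * T powr (- (\<alpha>/2))"
    using assms by (simp add: u_def powr_mult powr_powr powr_minus)
  finally have \<beta>: "\<beta> = u powr (\<alpha>/2) * T powr (- (\<alpha>/2))" .
  have "ln (1 + \<beta>) * exp (- T * \<beta> powr (2 / \<alpha>)) \<le> \<beta> * exp (- u)"
    using assms by (auto simp: u_def intro: mult_right_mono ln_add_one_self_le_self)
  also have "\<dots> = u powr (\<alpha>/2) * exp (- u) * T powr (- (\<alpha>/2))"
    by (simp add: \<beta> ac_simps)
  also have "\<dots> \<le> (\<alpha>/2) powr (\<alpha>/2) * exp (- (\<alpha>/2)) * T powr (- (\<alpha>/2))"
    using assms u by (intro mult_right_mono powr_mult_exp_minus_le) auto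
  finally show ?thesis .
qed

lemma bdd_above_unit_payoff_set:
  fixes \<alpha> T :: real
  assumes "0 < \<alpha>" "0 < T"
  shows "bdd_above {ln (1 + \<beta>) * exp (- T * \<beta> powr (2 / \<alpha>)) | \<beta>. \<beta> > 0}"
  by (rule bdd_aboveI[where M = "(\<alpha>/2) powr (\<alpha>/2) * exp (- (\<alpha>/2)) * T powr (- (\<alpha>/2))"])
    (use unit_payoff_set_le[OF assms] in auto)

lemma unit_payoff_ge:
  fixes \<alpha> T \<beta> :: real
  assumes "0 < \<alpha>" "0 < T" "0 < \<beta>"
  shows "ln (1 + \<beta>) * exp (- T * \<beta> powr (2 / \<alpha>)) \<le> unit_payoff \<alpha> T"
  unfolding unit_payoff_def
  using assms by (intro cSup_upper bdd_above_unit_payoff_set) auto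

lemma unit_payoff_le:
  fixes \<alpha> T :: real
  assumes "0 < \<alpha>" "0 < T"
  shows "unit_payoff \<alpha> T \<le> (\<alpha>/2) powr (\<alpha>/2) * exp (- (\<alpha>/2)) * T powr (- (\<alpha>/2))"
  unfolding unit_payoff_def
  using unit_payoff_set_le[OF assms] by (intro cSup_least) (auto intro: exI[of _ 1])

text \<open>Witness \<open>\<beta>\<close> with \<open>T \<beta>\<^sup>2\<^sup>/\<^sup>\<alpha> = \<alpha>/2\<close>, the maximiser of \<open>\<beta> exp (- T \<beta>\<^sup>2\<^sup>/\<^sup>\<alpha>)\<close>.\<close>

lemma unit_payoff_lower_bound:
  fixes \<alpha> T :: real
  assumes "0 < \<alpha>" "0 < T"
  shows "(\<alpha>/2) powr (\<alpha>/2) * exp (- (\<alpha>/2)) * T powr (- (\<alpha>/2)) / (1 + (\<alpha>/2/T) powr (\<alpha>/2))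
           \<le> unit_payoff \<alpha> T"
proof -
  define \<beta> where "\<beta> = (\<alpha>/2/T) powr (\<alpha>/2)"
  have \<beta>: "0 < \<beta>"
    using assms by (simp add: \<beta>_def)
  have "- T * \<beta> powr (2 / \<alpha>) = - (\<alpha>/2)"
    using assms by (simp add: \<beta>_def powr_powr)
  moreover have "\<beta> = (\<alpha>/2) powr (\<alpha>/2) * T powr (- (\<alpha>/2))"
    unfolding \<beta>_def powr_divide by (simp only: powr_minus divide_inverse)
  ultimately have "(\<alpha>/2) powr (\<alpha>/2) * exp (- (\<alpha>/2)) * T powr (- (\<alpha>/2)) / (1 + \<beta>)
      = \<beta> / (1 + \<beta>) * exp (- T * \<beta> powr (2 / \<alpha>))"
    by simp
  also have "\<dots> \<le> ln (1 + \<beta>) * exp (- T * \<beta> powr (2 / \<alpha>))"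
    using \<beta> by (intro mult_right_mono divide_add_one_le_ln_add_one) auto
  also have "\<dots> \<le> unit_payoff \<alpha> T"
    using assms \<beta> by (rule unit_payoff_ge)
  finally show ?thesis
    by (simp add: \<beta>_def)
qed

lemma unit_payoff_pos:
  fixes \<alpha> T :: real
  assumes "0 < \<alpha>" "0 < T"
  shows "0 < unit_payoff \<alpha> T"
  using unit_payoff_ge[OF assms, of 1] by (smt (verit) exp_gt_zero ln_gt_zero mult_pos_pos)

text \<open>Rescaling \<open>\<beta>\<close> by \<open>(T/T')\<^sup>\<alpha>\<^sup>/\<^sup>2\<close> turns the exponent for \<open>T\<close> into the one for \<open>T'\<close>,
  and concavity of \<open>ln\<close> controls the loss in the logarithm.\<close>

lemma unit_payoff_powr_mono:
  fixes \<alpha> T T' :: real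
  assumes "0 < \<alpha>" "0 < T" "T \<le> T'"
  shows "T powr (\<alpha>/2) * unit_payoff \<alpha> T \<le> T' powr (\<alpha>/2) * unit_payoff \<alpha> T'"
proof -
  define \<mu> where "\<mu> = (T/T') powr (\<alpha>/2)"
  have T': "0 < T'"
    using assms by simp
  have \<mu>: "0 < \<mu>" "\<mu> \<le> 1"
    using assms by (auto simp: \<mu>_def intro: powr_le1)
  have \<mu>_powr: "\<mu> powr (2 / \<alpha>) = T / T'"
    using assms T' by (simp add: \<mu>_def powr_powr)
  have "unit_payoff \<alpha> T \<le> unit_payoff \<alpha> T' / \<mu>"
    unfolding unit_payoff_def[of \<alpha> T]
  proof (rule cSup_least)
    fix v
    assume "v \<in> {ln (1 + \<beta>) * exp (- T * \<beta> powr (2 / \<alpha>)) | \<beta>. \<beta> > 0}"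
    then obtain \<beta> where \<beta>: "0 < \<beta>" and v: "v = ln (1 + \<beta>) * exp (- T * \<beta> powr (2 / \<alpha>))"
      by auto
    have "- T' * (\<mu> * \<beta>) powr (2 / \<alpha>) = - T * \<beta> powr (2 / \<alpha>)"
      using T' \<mu> \<beta> by (simp add: powr_mult \<mu>_powr)
    then have "ln (1 + \<mu> * \<beta>) * exp (- T * \<beta> powr (2 / \<alpha>)) \<le> unit_payoff \<alpha> T'"
      using unit_payoff_ge[of \<alpha> T' "\<mu> * \<beta>"] assms T' \<mu> \<beta> by simp
    moreover have "\<mu> * v \<le> ln (1 + \<mu> * \<beta>) * exp (- T * \<beta> powr (2 / \<alpha>))"
      unfolding v mult.assoc[symmetric]
      using \<mu> \<beta> by (intro mult_right_mono ln_add_one_scaled_ge) auto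
    ultimately show "v \<le> unit_payoff \<alpha> T' / \<mu>"
      using \<mu> by (simp add: field_simps)
  qed (auto intro: exI[of _ 1])
  then have "\<mu> * unit_payoff \<alpha> T \<le> unit_payoff \<alpha> T'"
    using \<mu> by (simp add: field_simps)
  then show ?thesis
    using assms T' by (simp add: \<mu>_def powr_divide field_simps)
qed

lemma rag_payoff_eq_unit_payoff:
  fixes \<alpha> x \<Lambda>1 \<Lambda>2 :: real
  assumes "0 < \<alpha>" "0 \<le> x" "0 < \<Lambda>1 + \<Lambda>2"
  shows "rag_payoff \<alpha> x \<Lambda>1 \<Lambda>2 = x * unit_payoff \<alpha> (\<Lambda>1 + \<Lambda>2)"
proof -
  let ?S = "{ln (1 + \<beta>) * exp (- (\<Lambda>1 + \<Lambda>2) * \<beta> powr (2 / \<alpha>)) | \<beta>. \<beta> > 0}"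
  have "{x * ln (1 + \<beta>) * exp (- (\<Lambda>1 + \<Lambda>2) * \<beta> powr (2 / \<alpha>)) | \<beta>. \<beta> > 0} = (\<lambda>v. x * v) ` ?S"
    by (auto simp: mult.assoc)
  moreover have "x * Sup ?S = Sup ((\<lambda>v. x * v) ` ?S)"
    using assms
    by (intro continuous_at_Sup_mono monoI mult_left_mono bdd_above_unit_payoff_set)
      (auto intro!: continuous_intros exI[of _ 1])
  ultimately show ?thesis
    by (simp add: rag_payoff_def unit_payoff_def)
qed

lemma rag_payoff_zero: "rag_payoff \<alpha> 0 \<Lambda>1 \<Lambda>2 = 0"
proof -
  have "{0 * ln (1 + \<beta>) * exp (- (\<Lambda>1 + \<Lambda>2) * \<beta> powr (2 / \<alpha>)) | \<beta>. (\<beta>::real) > 0} = {0::real}"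
    by (auto intro: exI[of _ 1])
  then show ?thesis
    by (simp add: rag_payoff_def)
qed

lemma U1_eq:
  fixes \<alpha> x y :: real
  assumes "0 < \<alpha>" "0 \<le> x" "0 \<le> y"
  shows "U1 \<alpha> x y = x * unit_payoff \<alpha> (x + y)"
  using assms rag_payoff_eq_unit_payoff[of \<alpha> x x y] rag_payoff_zero[of \<alpha> x y]
  by (cases "x = 0") (auto simp: U1_def)

lemma U2_eq:
  fixes \<alpha> x y :: real
  assumes "0 < \<alpha>" "0 \<le> x" "0 \<le> y"
  shows "U2 \<alpha> x y = y * unit_payoff \<alpha> (y + x)"
  using assms rag_payoff_eq_unit_payoff[of \<alpha> y x y] rag_payoff_zero[of \<alpha> x y]
  by (cases "y = 0") (auto simp: U2_def add.commute)

lemma mult_unit_payoff_strict_mono: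
  fixes \<alpha> x x' y :: real
  assumes "2 < \<alpha>" "0 < y" "0 \<le> x" "x < x'" "x' \<le> 2 / (\<alpha> - 2) * y"
  shows "x * unit_payoff \<alpha> (x + y) < x' * unit_payoff \<alpha> (x' + y)"
proof -
  define T T' where "T = x + y" and "T' = x' + y"
  have T: "0 < T" "0 < T'" "T \<le> T'"
    using assms by (auto simp: T_def T'_def)
  have "x' \<le> y / (\<alpha>/2 - 1)"
    using assms by (simp add: field_simps)
  then have "x * T powr (- (\<alpha>/2)) < x' * T' powr (- (\<alpha>/2))"
    unfolding T_def T'_def using assms by (intro mult_add_powr_strict_mono) auto
  moreover have "T powr (\<alpha>/2) * unit_payoff \<alpha> T \<le> T' powr (\<alpha>/2) * unit_payoff \<alpha> T'"
    using assms T by (intro unit_payoff_powr_mono) auto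
  moreover have "0 \<le> x * T powr (- (\<alpha>/2))" "0 < T powr (\<alpha>/2) * unit_payoff \<alpha> T"
    using assms T unit_payoff_pos[of \<alpha> T] by auto
  ultimately have "x * T powr (- (\<alpha>/2)) * (T powr (\<alpha>/2) * unit_payoff \<alpha> T)
      < x' * T' powr (- (\<alpha>/2)) * (T' powr (\<alpha>/2) * unit_payoff \<alpha> T')"
    by (rule mult_less_le_imp_less)
  moreover have cancel: "z * S powr (- (\<alpha>/2)) * (S powr (\<alpha>/2) * g) = z * g" if "0 < S" for z S g :: real
    using that by (simp add: powr_minus field_simps)
  ultimately show ?thesis
    unfolding cancel[OF T(1)] cancel[OF T(2)] by (simp add: T_def T'_def)
qed

lemma best_response_ge:
  fixes \<alpha> y M L :: real
  assumes "2 < \<alpha>" "0 < y" "0 \<le> L" "L \<le> M"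
    and best: "\<forall>x\<in>{0..M}. x * unit_payoff \<alpha> (x + y) \<le> L * unit_payoff \<alpha> (L + y)"
  shows "min M (2 / (\<alpha> - 2) * y) \<le> L"
proof (rule ccontr)
  define x' where "x' = min M (2 / (\<alpha> - 2) * y)"
  assume "\<not> x' \<le> L"
  then have "L * unit_payoff \<alpha> (L + y) < x' * unit_payoff \<alpha> (x' + y)"
    using assms by (intro mult_unit_payoff_strict_mono) (auto simp: x'_def)
  moreover have "x' \<in> {0..M}"
    using assms \<open>\<not> x' \<le> L\<close> by (auto simp: x'_def)
  ultimately show False
    using best by force
qed

lemma best_response_pos:
  fixes \<alpha> y M L :: real
  assumes "0 < \<alpha>" "0 \<le> y" "0 < M" "0 \<le> L"
    and best: "\<forall>x\<in>{0..M}. x * unit_payoff \<alpha> (x + y) \<le> L * unit_payoff \<alpha> (L + y)"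
  shows "0 < L"
proof (rule ccontr)
  assume "\<not> 0 < L"
  then have "M * unit_payoff \<alpha> (M + y) \<le> 0"
    using best assms by fastforce
  moreover have "0 < M * unit_payoff \<alpha> (M + y)"
    using assms unit_payoff_pos[of \<alpha> "M + y"] by simp
  ultimately show False
    by simp
qed

lemma nash_eq_iff_unit_payoff:
  fixes \<alpha> N1 N2 L1 L2 :: real
  assumes "0 < \<alpha>"
  shows "nash_eq \<alpha> N1 N2 L1 L2 \<longleftrightarrow> L1 \<in> {0..N1} \<and> L2 \<in> {0..N2} \<and>
           (\<forall>x\<in>{0..N1}. x * unit_payoff \<alpha> (x + L2) \<le> L1 * unit_payoff \<alpha> (L1 + L2)) \<and>
           (\<forall>y\<in>{0..N2}. y * unit_payoff \<alpha> (y + L1) \<le> L2 * unit_payoff \<alpha> (L2 + L1))"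
  using assms by (auto simp: nash_eq_def U1_eq U2_eq)

lemma nash_eq_full_load:
  fixes \<alpha> c N L1 L2 :: real
  assumes "2 < \<alpha>" "\<alpha> < 4" "1 \<le> c" "0 < N" and "nash_eq \<alpha> N (c * N) L1 L2"
  shows "L1 = N \<and> min (c * N) (2 / (\<alpha> - 2) * N) \<le> L2"
proof -
  define k where "k = 2 / (\<alpha> - 2)"
  have k: "1 < k"
    using assms by (simp add: k_def field_simps)
  have "N \<le> c * N"
    using assms by simp
  have L: "0 \<le> L1" "L1 \<le> N" "0 \<le> L2" "L2 \<le> c * N"
    and best1: "\<forall>x\<in>{0..N}. x * unit_payoff \<alpha> (x + L2) \<le> L1 * unit_payoff \<alpha> (L1 + L2)"
    and best2: "\<forall>y\<in>{0..c * N}. y * unit_payoff \<alpha> (y + L1) \<le> L2 * unit_payoff \<alpha> (L2 + L1)"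
    using assms nash_eq_iff_unit_payoff[of \<alpha> N "c * N" L1 L2] by auto
  have pos: "0 < L1" "0 < L2"
    using best_response_pos[OF _ _ _ _ best1] best_response_pos[OF _ _ _ _ best2] assms L
    by (auto simp: \<open>N \<le> c * N\<close>)
  have response2: "min (c * N) (k * L1) \<le> L2"
    using best_response_ge[OF _ _ _ _ best2] assms L pos by (simp add: k_def)
  have "L1 = N"
  proof (rule ccontr)
    assume "L1 \<noteq> N"
    then have "L1 < N"
      using L by simp
    moreover have "min N (k * L2) \<le> L1"
      using best_response_ge[OF _ _ _ _ best1] assms L pos by (simp add: k_def)
    ultimately have "k * L2 \<le> L1"
      by simp
    moreover have "L2 < k * L2" "L1 < k * L1"
      using k pos by simp_all
    moreover have "c * N \<le> L2 \<or> k * L1 \<le> L2"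
      using response2 by (simp add: min_le_iff_disj)
    ultimately show False
      using \<open>L1 < N\<close> \<open>N \<le> c * N\<close> by linarith
  qed
  then show ?thesis
    using response2 by (simp add: k_def)
qed

text \<open>Compare \<open>L\<close> with the deviation \<open>t N\<close> by the two-sided estimate of \<open>unit_payoff\<close>: all
  powers of \<open>N\<close> cancel except in the error factor of the lower estimate.\<close>

lemma best_response_load_ratio:
  fixes \<alpha> N M L t :: real
  assumes "0 < \<alpha>" "0 < N" "0 < t" "t * N \<le> M" "0 \<le> L"
    and best: "\<forall>y\<in>{0..M}. y * unit_payoff \<alpha> (y + N) \<le> L * unit_payoff \<alpha> (L + N)"
  shows "t * (t + 1) powr (- (\<alpha>/2)) / (1 + (\<alpha>/2 / (N * (t + 1))) powr (\<alpha>/2))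
           \<le> L / N * (L / N + 1) powr (- (\<alpha>/2))"
proof -
  define G where "G = (\<alpha>/2) powr (\<alpha>/2) * exp (- (\<alpha>/2))"
  define B where "B = 1 + (\<alpha>/2 / (N * (t + 1))) powr (\<alpha>/2)"
  define C where "C = N * N powr (- (\<alpha>/2)) * G"
  have "0 < C"
    using assms by (simp add: C_def G_def)
  have scale: "z * N * (N * s) powr (- (\<alpha>/2)) = N * N powr (- (\<alpha>/2)) * (z * s powr (- (\<alpha>/2)))"
    if "0 < s" for z s :: real
    using that assms by (simp add: powr_mult)
  have "C * (t * (t + 1) powr (- (\<alpha>/2)) / B) = t * N * (G * (N * (t + 1)) powr (- (\<alpha>/2)) / B)"
    using assms scale[of "t + 1" t] by (simp add: C_def)
  also have "\<dots> \<le> t * N * unit_payoff \<alpha> (t * N + N)"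
    using assms unit_payoff_lower_bound[of \<alpha> "N * (t + 1)"]
    by (intro mult_left_mono) (auto simp: G_def B_def algebra_simps add_pos_pos)
  also have "\<dots> \<le> L * unit_payoff \<alpha> (L + N)"
    using best assms by auto
  also have "\<dots> \<le> L * (G * (N * (L / N + 1)) powr (- (\<alpha>/2)))"
    using assms unit_payoff_le[of \<alpha> "L + N"]
    by (intro mult_left_mono) (auto simp: G_def algebra_simps)
  also have "\<dots> = C * (L / N * (L / N + 1) powr (- (\<alpha>/2)))"
  proof -
    have "0 < L / N + 1"
      using assms by (intro add_nonneg_pos divide_nonneg_pos) auto
    from scale[OF this, of "L / N"] show ?thesis
      using assms by (force simp: C_def)
  qed
  finally show ?thesis
    using \<open>0 < C\<close> by (simp only: mult_le_cancel_left_pos B_def)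
qed

lemma tendsto_powr_divide_at_top:
  fixes a b c :: real
  assumes "0 < a" "0 < b" "0 \<le> c"
  shows "((\<lambda>N. (c / (N * b)) powr a) \<longlongrightarrow> 0) at_top"
proof (rule tendsto_zero_powrI)
  have "filterlim (\<lambda>N. N * b) at_top at_top"
    using assms by (intro filterlim_at_top_mult_tendsto_pos[OF tendsto_const] filterlim_ident)
  then show "((\<lambda>N. c / (N * b)) \<longlongrightarrow> 0) at_top"
    by (intro tendsto_divide_0[OF tendsto_const] filterlim_at_top_imp_at_infinity)
  show "\<forall>\<^sub>F N in at_top. 0 \<le> c / (N * b)"
    using eventually_gt_at_top[of 0] by eventually_elim (use assms in auto)
qed (use assms in auto)

lemma tendsto_eventually_between:
  fixes f :: "'a \<Rightarrow> real"
  assumes "\<forall>\<^sub>F x in F. m \<le> f x" and "\<And>\<epsilon>. 0 < \<epsilon> \<Longrightarrow> \<forall>\<^sub>F x in F. f x \<le> m + \<epsilon>"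
  shows "(f \<longlongrightarrow> m) F"
proof (rule order_tendstoI)
  fix a
  assume "a < m"
  with assms(1) show "\<forall>\<^sub>F x in F. a < f x"
    by (auto elim: eventually_mono)
next
  fix b
  assume "m < b"
  then have "\<forall>\<^sub>F x in F. f x \<le> m + (b - m) / 2"
    by (intro assms(2)) simp
  then show "\<forall>\<^sub>F x in F. f x < b"
    using \<open>m < b\<close> by (auto elim!: eventually_mono simp: field_simps)
qed

lemma nash_eq_eventually_load_ratio_le:
  fixes \<alpha> c \<epsilon> :: real
  assumes "2 < \<alpha>" "\<alpha> < 4" "1 \<le> c" "0 < \<epsilon>"
  shows "\<forall>\<^sub>F N in at_top. \<forall>L1 L2. nash_eq \<alpha> N (c * N) L1 L2 \<longrightarrow>
           L2 / N \<le> min c (2 / (\<alpha> - 2)) + \<epsilon>"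
proof (cases "c \<le> 2 / (\<alpha> - 2)")
  case True
  have bound: "L2 / N \<le> min c (2 / (\<alpha> - 2)) + \<epsilon>"
    if "0 < N" "nash_eq \<alpha> N (c * N) L1 L2" for N L1 L2
    using that True assms
    by (auto simp: nash_eq_def min_absorb1 pos_divide_le_eq distrib_right add_increasing2)
  show ?thesis
    using eventually_gt_at_top[of 0] by eventually_elim (blast intro: bound)
next
  case False
  define k where "k = 2 / (\<alpha> - 2)"
  define \<phi> where "\<phi> t = t * (t + 1) powr (- (\<alpha>/2))" for t
  define B where "B N = 1 + (\<alpha>/2 / (N * (k + 1))) powr (\<alpha>/2)" for N
  have k: "0 < k" "k < c" "1 / (\<alpha>/2 - 1) = k"
    using assms False by (auto simp: k_def field_simps)
  have decrease: "\<phi> s < \<phi> (k + \<epsilon>)" if "k + \<epsilon> < s" for s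
    unfolding \<phi>_def using assms k that by (intro mult_add_powr_strict_antimono) auto
  have "((\<lambda>N. \<phi> k / B N) \<longlongrightarrow> \<phi> k / (1 + 0)) at_top"
    unfolding B_def using assms k by (intro tendsto_intros tendsto_powr_divide_at_top) auto
  moreover have "\<phi> (k + \<epsilon>) < \<phi> k"
    unfolding \<phi>_def using assms k by (intro mult_add_powr_strict_antimono) auto
  ultimately have "\<forall>\<^sub>F N in at_top. \<phi> (k + \<epsilon>) < \<phi> k / B N"
    by (intro order_tendstoD(1)) auto
  then show ?thesis
    using eventually_gt_at_top[of 0]
  proof eventually_elim
    case (elim N)
    show ?case
    proof (intro allI impI)
      fix L1 L2
      assume ne: "nash_eq \<alpha> N (c * N) L1 L2"
      then have "L1 = N"
        using nash_eq_full_load assms elim by blast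
      then have "0 \<le> L2"
        and best: "\<forall>y\<in>{0..c * N}. y * unit_payoff \<alpha> (y + N) \<le> L2 * unit_payoff \<alpha> (L2 + N)"
        using ne nash_eq_iff_unit_payoff[of \<alpha> N "c * N" L1 L2] assms by auto
      then have "\<phi> k / B N \<le> \<phi> (L2 / N)"
        unfolding \<phi>_def B_def using assms k elim
        by (intro best_response_load_ratio) (auto simp: add.commute)
      then have "L2 / N \<le> k + \<epsilon>"
        using decrease[of "L2 / N"] elim(1) by (smt (verit))
      then show "L2 / N \<le> min c (2 / (\<alpha> - 2)) + \<epsilon>"
        using k by (simp add: k_def[symmetric] min_absorb2)
    qed
  qed
qed

theorem theorem3:
  fixes \<alpha> c :: real and L1 L2 :: "real \<Rightarrow> real"
  assumes "2 < \<alpha>" and "\<alpha> < 4" and "c \<ge> 1"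
    and "\<forall>N1>0. nash_eq \<alpha> N1 (c * N1) (L1 N1) (L2 N1)"
  shows "(\<forall>\<^sub>F N1 in at_top. L1 N1 = N1) \<and>
         ((\<lambda>N1. L2 N1 / N1) \<longlongrightarrow> min c (2 / (\<alpha> - 2))) at_top"
proof -
  define m where "m = min c (2 / (\<alpha> - 2))"
  have full: "L1 N = N \<and> m \<le> L2 N / N" if "0 < N" for N
  proof -
    have "min (c * N) (2 / (\<alpha> - 2) * N) = m * N"
      using that by (simp add: m_def min_mult_distrib_right)
    then show ?thesis
      using nash_eq_full_load[of \<alpha> c N "L1 N" "L2 N"] assms that by (simp add: pos_le_divide_eq)
  qed
  have "((\<lambda>N. L2 N / N) \<longlongrightarrow> m) at_top"
  proof (rule tendsto_eventually_between)
    show "\<forall>\<^sub>F N in at_top. m \<le> L2 N / N"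
      using eventually_gt_at_top[of 0] by eventually_elim (use full in blast)
    show "\<forall>\<^sub>F N in at_top. L2 N / N \<le> m + \<epsilon>" if "0 < \<epsilon>" for \<epsilon>
      using nash_eq_eventually_load_ratio_le[OF assms(1-3) that] eventually_gt_at_top[of 0]
      by eventually_elim (use assms(4) in \<open>auto simp: m_def\<close>)
  qed
  moreover have "\<forall>\<^sub>F N in at_top. L1 N = N"
    using eventually_gt_at_top[of 0] by eventually_elim (use full in blast)
  ultimately show ?thesis
    by (simp add: m_def)
qed

end
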